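(* Fix $a>0$. Let $\mu$ be a probability measure on $\mathbb{R}_+^\infty$ and $(\mathbf{U},\mathbf{V}_a)$ a coupling of $\mu$ and $\pi_a$ such that almost surely $\limsup_{d\to\infty}\frac{\log\log d}{\log d}\sum_{i=1}^d|V_{a,i}-U_i|=0$ and $\limsup_{d\to\infty}\frac{U_d}{dV_{a,d}}<\infty$. Then, almost surely, there exists $i_0\ge2$ such that $s(\mathbf{U})_i\ge(4a)^{-1}\log i$ for all $i\ge i_0$. Moreover $s(\mathbf{U})$, $s(\mathbf{U}\wedge\mathbf{V}_a)$ and $s(\mathbf{V}_a)$ all satisfy the summability condition $\sum_i e^{-\alpha s(\cdot)_i^2}<\infty$ for all $\alpha>0$ almost surely; in particular $\mu\in\mathcal{S}$.
   Context: $\pi_a=\bigotimes_{i\ge1}\operatorname{Exp}(2+ia)$ with $\operatorname{Exp}(\lambda)$ the exponential law of rate $\lambda$. For $\mathbf{v}=(v_1,v_2,\dots)\in\mathbb{R}_+^\infty$, $s(\mathbf{v})$ is the vector with $i$-th coordinate $v_1+\cdots+v_i$; $\wedge$ is the coordinatewise minimum. $\mathcal{S}$ is the set of laws of gap vectors $(y_i-y_{i-1})_{i\ge1}$ of random sequences $0=y_0\le y_1\le\cdots$ with $\sum_ie^{-\alpha y_i^2}<\infty$ for all $\alpha>0$ a.s. (equivalently, laws of $\mathbf{v}$ with $s(\mathbf{v})$ satisfying this summability). *)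

theory Defs
  imports "HOL-Probability.Probability"
begin

text \<open>Sequences in R_+^infinity are modelled as nat => real, 0-based:
  coordinate n (n = 0,1,...) is the paper's coordinate n+1.\<close>

definition seq_space :: "(nat \<Rightarrow> real) measure" where
  "seq_space = PiM UNIV (\<lambda>_. borel)"

definition pi_a :: "real \<Rightarrow> (nat \<Rightarrow> real) measure" where
  "pi_a a = PiM UNIV (\<lambda>n. density lborel (exponential_density (2 + real (Suc n) * a)))"

text \<open>psums v i = v_1 + ... + v_i (the paper's s(v)_i for i >= 1; psums v 0 = 0 = y_0).\<close>
definition psums :: "(nat \<Rightarrow> real) \<Rightarrow> nat \<Rightarrow> real" where
  "psums v i = (\<Sum>k<i. v k)"

definition gauss_summable :: "(nat \<Rightarrow> real) \<Rightarrow> bool" where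
  "gauss_summable y \<longleftrightarrow> (\<forall>\<alpha>>0. summable (\<lambda>i. exp (- \<alpha> * (y i)\<^sup>2)))"

definition class_S :: "(nat \<Rightarrow> real) measure \<Rightarrow> bool" where
  "class_S \<mu> \<longleftrightarrow> prob_space \<mu> \<and> sets \<mu> = sets seq_space \<and>
     (AE v in \<mu>. (\<forall>n. 0 \<le> v n) \<and> gauss_summable (psums v))"

end

theory Submission
  imports Defs "HOL-Real_Asymp.Real_Asymp"
begin

(* Under pi_a the gaps V_i are independent exponentials of rates r_i = 2 + i a, so
   E exp(-4a s(V)_n) = prod_{i<=n} r_i / r_(i+4), which telescopes to O(n^-4). A Chernoff bound
   then gives P(s(V)_n <= log n / (2a)) = O(n^-2), and Borel-Cantelli yields s(V)_n > log n / (2a)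
   eventually, almost surely. Hypothesis H1 makes sum_(i<=n) |V_i - U_i| = o(log n), so the partial
   sums of U and of min(U, V) stay above log n / (4a). Finally, any y_n >= c log n is Gauss-summable,
   because exp(-beta (log n)^2) = O(n^-2). *)

lemma nn_integral_exp_exponential_density:
  fixes l \<theta> :: real
  assumes l: "0 < l" and \<theta>: "0 \<le> \<theta>"
  shows "(\<integral>\<^sup>+x. ennreal (exp (- \<theta> * x)) \<partial>density lborel (exponential_density l))
       = ennreal (l / (l + \<theta>))"
proof -
  have "(\<integral>\<^sup>+x. ennreal (exp (- \<theta> * x)) \<partial>density lborel (exponential_density l))
      = (\<integral>\<^sup>+x. ennreal (l / (l + \<theta>)) * ennreal (exponential_density (l + \<theta>) x * x ^ 0) \<partial>lborel)"
  proof (subst nn_integral_density, simp, simp, intro nn_integral_cong)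
    fix x :: real
    have "exponential_density l x * exp (- \<theta> * x)
        = l / (l + \<theta>) * (exponential_density (l + \<theta>) x * x ^ 0)"
      using l \<theta> by (auto simp: exponential_density_def field_simps mult_exp_exp)
    then show "ennreal (exponential_density l x) * ennreal (exp (- \<theta> * x))
        = ennreal (l / (l + \<theta>)) * ennreal (exponential_density (l + \<theta>) x * x ^ 0)"
      using l \<theta> by (simp add: ennreal_mult'[symmetric] ennreal_mult[symmetric] exponential_density_nonneg)
  qed
  also have "\<dots> = ennreal (l / (l + \<theta>))"
    using nn_integral_erlang_ith_moment[of "l + \<theta>" 0 0] l \<theta> by (simp add: nn_integral_cmult)
  finally show ?thesis .
qed

lemma nn_integral_exp_psums_PiM_exponential:
  fixes r :: "nat \<Rightarrow> real" and \<theta> :: real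
  assumes r: "\<And>k. 0 < r k" and \<theta>: "0 \<le> \<theta>"
  shows "(\<integral>\<^sup>+v. ennreal (exp (- \<theta> * psums v n))
            \<partial>PiM UNIV (\<lambda>k. density lborel (exponential_density (r k))))
       = ennreal (\<Prod>k<n. r k / (r k + \<theta>))"
proof -
  define Mk where "Mk = (\<lambda>k. density lborel (exponential_density (r k)))"
  interpret product_prob_space Mk UNIV
    unfolding Mk_def product_prob_space_def product_prob_space_axioms_def product_sigma_finite_def
    using r by (auto intro!: prob_space_imp_sigma_finite prob_space_exponential_density)
  define f where "f = (\<lambda>x::nat \<Rightarrow> real. \<Prod>k<n. ennreal (exp (- \<theta> * x k)))"
  have f_meas: "f \<in> borel_measurable (PiM {..<n} Mk)"
    unfolding f_def Mk_def by measurable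
  have "(\<integral>\<^sup>+v. ennreal (exp (- \<theta> * psums v n)) \<partial>PiM UNIV Mk)
      = (\<integral>\<^sup>+v. f (restrict v {..<n}) \<partial>PiM UNIV Mk)"
    by (intro nn_integral_cong) (simp add: f_def psums_def sum_distrib_left exp_sum prod_ennreal)
  also have "\<dots> = (\<integral>\<^sup>+x. f x \<partial>distr (PiM UNIV Mk) (PiM {..<n} Mk) (\<lambda>v. restrict v {..<n}))"
    using f_meas measurable_restrict_subset[of "{..<n}" UNIV Mk] by (simp add: nn_integral_distr)
  also have "\<dots> = (\<integral>\<^sup>+x. f x \<partial>PiM {..<n} Mk)"
    by (subst distr_PiM_restrict_finite) auto
  also have "\<dots> = (\<Prod>k<n. \<integral>\<^sup>+x. ennreal (exp (- \<theta> * x)) \<partial>Mk k)"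
    unfolding f_def by (rule product_nn_integral_prod) (auto simp: Mk_def)
  also have "\<dots> = (\<Prod>k<n. ennreal (r k / (r k + \<theta>)))"
    unfolding Mk_def by (intro prod.cong refl nn_integral_exp_exponential_density r \<theta>)
  also have "\<dots> = ennreal (\<Prod>k<n. r k / (r k + \<theta>))"
    by (intro prod_ennreal divide_nonneg_nonneg add_nonneg_nonneg less_imp_le[OF r] \<theta>)
  finally show ?thesis
    unfolding Mk_def .
qed

lemma prod_ratio_shift:
  fixes x :: "nat \<Rightarrow> 'a::field"
  assumes x: "\<And>j. x j \<noteq> 0"
  shows "(\<Prod>k<n. x k / x (k + m)) = (\<Prod>k<m. x k) / (\<Prod>k<m. x (n + k))"
proof (induction n)
  case 0
  then show ?case using x by simp
next
  case (Suc n)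
  have "x n * (\<Prod>k<m. x (Suc n + k)) = x (n + m) * (\<Prod>k<m. x (n + k))"
    using prod.lessThan_Suc_shift[of "\<lambda>k. x (n + k)" m] prod.lessThan_Suc[of "\<lambda>k. x (n + k)" m]
    by (simp add: ac_simps)
  then have shift: "(\<Prod>k<m. x (Suc n + k)) = x (n + m) * (\<Prod>k<m. x (n + k)) / x n"
    using x by (simp add: eq_divide_eq ac_simps)
  show ?case
    unfolding prod.lessThan_Suc Suc.IH shift using x by (simp add: prod_zero_iff)
qed

lemma pi_a_prob_space: "a > 0 \<Longrightarrow> prob_space (pi_a a)"
  unfolding pi_a_def
  by (rule prob_space_PiM) (auto intro!: prob_space_exponential_density add_pos_nonneg)

lemma borel_measurable_psums_pi_a: "(\<lambda>v. psums v n) \<in> borel_measurable (pi_a a)"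
  unfolding pi_a_def psums_def by measurable

lemma pi_a_psums_le_ln_bound:
  fixes a :: real
  assumes a: "a > 0" and n: "n \<ge> 1"
  shows "measure (pi_a a) {v \<in> space (pi_a a). psums v n \<le> ln (real n) / (2 * a)}
       \<le> (\<Prod>k<4. 2 + real (Suc k) * a) / (a ^ 4 * (real n)\<^sup>2)"
proof -
  interpret prob_space "pi_a a" by (rule pi_a_prob_space[OF a])
  define r where "r = (\<lambda>k::nat. 2 + real (Suc k) * a)"
  have r_pos: "0 < r k" for k
    using a by (simp add: r_def add_pos_nonneg)
  let ?A = "{v \<in> space (pi_a a). psums v n \<le> ln (real n) / (2 * a)}"
  \<comment> \<open>Chernoff with parameter 4a: the exponential factor becomes n^2, and since
    r k + 4a = r (k + 4) the Laplace transform telescopes to O(n^-4).\<close>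
  have "emeasure (pi_a a) ?A
      \<le> ennreal (exp (4 * a * (ln (real n) / (2 * a))))
        * (\<integral>\<^sup>+v. ennreal (exp (- (4 * a) * psums v n)) * indicator (space (pi_a a)) v \<partial>pi_a a)"
    using a by (intro Chernoff_ineq_nn_integral_le) (simp_all add: borel_measurable_psums_pi_a)
  also have "exp (4 * a * (ln (real n) / (2 * a))) = (real n)\<^sup>2"
  proof -
    have "4 * a * (ln (real n) / (2 * a)) = 2 * ln (real n)"
      using a by simp
    then show ?thesis
      using n exp_of_nat_mult[of 2 "ln (real n)"] by simp
  qed
  also have "(\<integral>\<^sup>+v. ennreal (exp (- (4 * a) * psums v n)) * indicator (space (pi_a a)) v \<partial>pi_a a)
      = ennreal (\<Prod>k<n. r k / (r k + 4 * a))"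
  proof -
    have "(\<integral>\<^sup>+v. ennreal (exp (- (4 * a) * psums v n)) * indicator (space (pi_a a)) v \<partial>pi_a a)
        = (\<integral>\<^sup>+v. ennreal (exp (- (4 * a) * psums v n)) \<partial>pi_a a)"
      by (intro nn_integral_cong) simp
    also have "\<dots> = ennreal (\<Prod>k<n. r k / (r k + 4 * a))"
      unfolding pi_a_def r_def using a r_pos[unfolded r_def]
      by (intro nn_integral_exp_psums_PiM_exponential) auto
    finally show ?thesis .
  qed
  finally have "emeasure (pi_a a) ?A \<le> ennreal ((real n)\<^sup>2 * (\<Prod>k<n. r k / (r k + 4 * a)))"
    by (simp add: ennreal_mult')
  moreover have "0 \<le> (real n)\<^sup>2 * (\<Prod>k<n. r k / (r k + 4 * a))"
    using a r_pos by (intro mult_nonneg_nonneg prod_nonneg divide_nonneg_nonneg add_nonneg_nonneg)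
      (auto intro: less_imp_le)
  ultimately have "measure (pi_a a) ?A \<le> (real n)\<^sup>2 * (\<Prod>k<n. r k / (r k + 4 * a))"
    by (simp add: emeasure_eq_measure ennreal_le_iff)
  also have "(\<Prod>k<n. r k / (r k + 4 * a)) = (\<Prod>k<4. r k) / (\<Prod>k<4. r (n + k))"
  proof -
    have "r k + 4 * a = r (k + 4)" for k
      by (simp add: r_def algebra_simps)
    then show ?thesis
      using prod_ratio_shift[where x = r and n = n and m = 4] r_pos by (simp add: less_imp_neq[symmetric])
  qed
  also have "(real n)\<^sup>2 * \<dots> \<le> (real n)\<^sup>2 * ((\<Prod>k<4. r k) / (real n * a) ^ 4)"
  proof (intro mult_left_mono divide_left_mono)
    have "(\<Prod>k<4::nat. real n * a) \<le> (\<Prod>k<4. r (n + k))"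
      using a by (intro prod_mono) (auto simp: r_def algebra_simps)
    then show "(real n * a) ^ 4 \<le> (\<Prod>k<4. r (n + k))"
      by simp
  qed (use a n r_pos in \<open>auto intro!: prod_nonneg prod_pos mult_pos_pos less_imp_le\<close>)
  also have "\<dots> = (\<Prod>k<4. r k) / (a ^ 4 * (real n)\<^sup>2)"
    using a n by (simp add: power_mult_distrib divide_simps eval_nat_numeral)
  finally show ?thesis
    unfolding r_def .
qed

lemma pi_a_AE_eventually_psums_gt_ln:
  fixes a :: real
  assumes a: "a > 0"
  shows "AE v in pi_a a. eventually (\<lambda>n. ln (real n) / (2 * a) < psums v n) sequentially"
proof -
  interpret prob_space "pi_a a" by (rule pi_a_prob_space[OF a])
  define A where "A = (\<lambda>n. {v \<in> space (pi_a a). psums v n \<le> ln (real n) / (2 * a)})"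
  define K where "K = (\<Prod>k<4. 2 + real (Suc k) * a) / a ^ 4"
  have A_sets: "A n \<in> sets (pi_a a)" for n
    unfolding A_def pi_a_def psums_def by measurable
  have "summable (\<lambda>n. K * inverse (real n ^ 2))"
    by (intro summable_mult inverse_power_summable) simp
  then have "summable (\<lambda>n. measure (pi_a a) (A n))"
  proof (rule summable_comparison_test'[where N = 1])
    fix n :: nat assume "1 \<le> n"
    then show "norm (measure (pi_a a) (A n)) \<le> K * inverse (real n ^ 2)"
      using pi_a_psums_le_ln_bound[OF a] by (simp add: A_def K_def field_simps)
  qed
  then have "AE v in pi_a a. eventually (\<lambda>n. v \<in> space (pi_a a) - A n) sequentially"
    by (intro borel_cantelli_AE1 A_sets) (simp add: emeasure_eq_measure)
  then show ?thesis
    by (rule AE_mp) (auto simp: A_def elim!: eventually_mono intro!: AE_I2)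
qed

lemma eventually_le_mult_ln_of_limsup_lnln:
  fixes D :: "nat \<Rightarrow> real" and c :: real
  assumes D: "\<And>d. 0 \<le> D d" and c: "0 < c"
    and lim: "limsup (\<lambda>d. ereal (ln (ln (real d)) / ln (real d) * D d)) = 0"
  shows "eventually (\<lambda>d. D d \<le> c * ln (real d)) sequentially"
proof -
  have "eventually (\<lambda>d. ereal (ln (ln (real d)) / ln (real d) * D d) < 1) sequentially"
    by (rule Limsup_lessD) (unfold lim, simp)
  moreover have "filterlim (\<lambda>d::nat. ln (ln (real d))) at_top sequentially"
    by real_asymp
  then have "eventually (\<lambda>d. 1 / c \<le> ln (ln (real d))) sequentially"
    by (simp add: filterlim_at_top)
  moreover have "eventually (\<lambda>d::nat. 0 < ln (real d)) sequentially"
    by real_asymp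
  ultimately show ?thesis
  proof eventually_elim
    case (elim d)
    then have "c * (ln (ln (real d)) * D d) < c * ln (real d)"
      using c by (simp add: field_simps)
    moreover have "D d * 1 \<le> D d * (c * ln (ln (real d)))"
      using elim c D[of d] by (intro mult_left_mono) (simp_all add: field_simps)
    ultimately show ?case
      by (simp add: ac_simps)
  qed
qed

lemma psums_diff_le:
  assumes "\<And>k. v k - w k \<le> e k"
  shows "psums v n - psums w n \<le> (\<Sum>k<n. e k)"
  unfolding psums_def sum_subtractf[symmetric] by (intro sum_mono assms)

lemma eventually_psums_ge_ln_of_close:
  fixes u v w :: "nat \<Rightarrow> real" and c :: real
  assumes c: "0 < c"
    and v: "eventually (\<lambda>n. ln (real n) / c < psums v n) sequentially"
    and w: "\<And>k. v k - w k \<le> \<bar>v k - u k\<bar>"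
    and lim: "limsup (\<lambda>d. ereal (ln (ln (real d)) / ln (real d) * (\<Sum>k<d. \<bar>v k - u k\<bar>))) = 0"
  shows "eventually (\<lambda>n. ln (real n) / (2 * c) \<le> psums w n) sequentially"
proof -
  have "eventually (\<lambda>n. (\<Sum>k<n. \<bar>v k - u k\<bar>) \<le> 1 / (2 * c) * ln (real n)) sequentially"
    by (rule eventually_le_mult_ln_of_limsup_lnln[OF _ _ lim]) (use c in \<open>simp_all add: sum_nonneg\<close>)
  with v show ?thesis
  proof eventually_elim
    case (elim n)
    have "psums v n \<le> psums w n + (\<Sum>k<n. \<bar>v k - u k\<bar>)"
      using psums_diff_le[of v w "\<lambda>k. \<bar>v k - u k\<bar>" n, OF w] by simp
    then have "c * psums v n \<le> c * psums w n + c * (\<Sum>k<n. \<bar>v k - u k\<bar>)"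
      using c by (simp add: distrib_left[symmetric])
    then show ?case
      using elim c by (simp add: field_simps)
  qed
qed

lemma gauss_summable_if_eventually_ln_le:
  fixes y :: "nat \<Rightarrow> real" and c :: real
  assumes c: "0 < c" and y: "eventually (\<lambda>n. ln (real n) / c \<le> y n) sequentially"
  shows "gauss_summable y"
  unfolding gauss_summable_def
proof (intro allI impI)
  fix \<alpha> :: real
  assume \<alpha>: "0 < \<alpha>"
  define \<beta> where "\<beta> = \<alpha> / c\<^sup>2"
  have "0 < \<beta>"
    using \<alpha> c by (simp add: \<beta>_def)
  then have "(\<lambda>n::nat. exp (- \<beta> * ln (real n) ^ 2)) \<in> O(\<lambda>n. 1 / real n ^ 2)"
    by real_asymp
  then have summable_bound: "summable (\<lambda>n::nat. exp (- \<beta> * ln (real n) ^ 2))"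
    by (rule summable_comparison_test_bigo[rotated]) (simp add: inverse_power_summable flip: inverse_eq_divide)
  have "eventually (\<lambda>n. norm (exp (- \<alpha> * (y n)\<^sup>2)) \<le> exp (- \<beta> * ln (real n) ^ 2)) sequentially"
    using y eventually_ge_at_top[of 1]
  proof eventually_elim
    case (elim n)
    then have "(ln (real n) / c)\<^sup>2 \<le> (y n)\<^sup>2"
      using c by (intro power_mono) auto
    then show ?case
      using \<alpha> c by (simp add: \<beta>_def power_divide field_simps)
  qed
  then show "summable (\<lambda>n. exp (- \<alpha> * (y n)\<^sup>2))"
    using summable_bound by (rule summable_comparison_test_ev)
qed

lemma AE_eventually_psums_ge_ln_of_close_to_pi_a:
  fixes a :: real and U V :: "'w \<Rightarrow> nat \<Rightarrow> real"
  assumes a: "a > 0"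
    and V_meas: "V \<in> measurable M seq_space" and V_law: "distr M seq_space V = pi_a a"
    and close: "AE \<omega> in M. limsup (\<lambda>d. ereal (ln (ln (real d)) / ln (real d)
                 * (\<Sum>n<d. \<bar>V \<omega> n - U \<omega> n\<bar>))) = 0"
  shows "AE \<omega> in M. \<forall>w. (\<forall>k. V \<omega> k - w k \<le> \<bar>V \<omega> k - U \<omega> k\<bar>)
           \<longrightarrow> eventually (\<lambda>n. ln (real n) / (4 * a) \<le> psums w n) sequentially"
proof -
  have "AE \<omega> in M. eventually (\<lambda>n. ln (real n) / (2 * a) < psums (V \<omega>) n) sequentially"
    using pi_a_AE_eventually_psums_gt_ln[OF a] unfolding V_law[symmetric]
    by (rule AE_distrD[OF V_meas])
  with close show ?thesis
  proof eventually_elim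
    case (elim \<omega>)
    show ?case
    proof (intro allI impI)
      fix w
      assume "\<forall>k. V \<omega> k - w k \<le> \<bar>V \<omega> k - U \<omega> k\<bar>"
      then show "eventually (\<lambda>n. ln (real n) / (4 * a) \<le> psums w n) sequentially"
        using eventually_psums_ge_ln_of_close[of "2 * a" "V \<omega>" w "U \<omega>", OF _ elim(2) _ elim(1)] a
        by simp
    qed
  qed
qed

lemma sets_eventually_ln_le_psums:
  "{v \<in> space seq_space. eventually (\<lambda>n. ln (real n) / c \<le> psums v n) sequentially}
     \<in> sets seq_space"
  unfolding eventually_sequentially psums_def seq_space_def by measurable

lemma class_S_if_AE_eventually_ln_le:
  fixes c :: real
  assumes c: "0 < c" and "prob_space \<mu>" and "sets \<mu> = sets seq_space"
    and nonneg: "AE v in \<mu>. \<forall>n. 0 \<le> v n"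
    and growth: "AE v in \<mu>. eventually (\<lambda>n. ln (real n) / c \<le> psums v n) sequentially"
  shows "class_S \<mu>"
proof -
  have "AE v in \<mu>. (\<forall>n. 0 \<le> v n) \<and> gauss_summable (psums v)"
    using nonneg growth by eventually_elim (use c gauss_summable_if_eventually_ln_le in blast)
  with assms show ?thesis
    by (simp add: class_S_def)
qed

theorem mainTheorem10:
  fixes a :: real and \<mu> :: "(nat \<Rightarrow> real) measure"
    and M :: "'w measure" and U V :: "'w \<Rightarrow> nat \<Rightarrow> real"
  assumes a_pos: "a > 0"
    and mu_prob: "prob_space \<mu>" and mu_sets: "sets \<mu> = sets seq_space"
    and mu_nonneg: "AE v in \<mu>. \<forall>n. 0 \<le> v n"
    and M_prob: "prob_space M"
    and U_meas: "U \<in> measurable M seq_space" and V_meas: "V \<in> measurable M seq_space"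
    and U_law: "distr M seq_space U = \<mu>" and V_law: "distr M seq_space V = pi_a a"
    and H1: "AE \<omega> in M. limsup (\<lambda>d. ereal (ln (ln (real d)) / ln (real d)
                 * (\<Sum>n<d. \<bar>V \<omega> n - U \<omega> n\<bar>))) = 0"
    and H2: "AE \<omega> in M. limsup (\<lambda>d. ereal (U \<omega> (d - 1) / (real d * V \<omega> (d - 1)))) < \<infinity>"
  shows "(AE \<omega> in M. \<exists>i0\<ge>2. \<forall>i\<ge>i0. psums (U \<omega>) i \<ge> ln (real i) / (4 * a))
       \<and> (AE \<omega> in M. gauss_summable (psums (U \<omega>))
             \<and> gauss_summable (psums (\<lambda>n. min (U \<omega> n) (V \<omega> n)))
             \<and> gauss_summable (psums (V \<omega>)))
       \<and> class_S \<mu>"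
proof -
  have good: "AE \<omega> in M. \<forall>w. (\<forall>k. V \<omega> k - w k \<le> \<bar>V \<omega> k - U \<omega> k\<bar>)
      \<longrightarrow> eventually (\<lambda>n. ln (real n) / (4 * a) \<le> psums w n) sequentially"
    by (rule AE_eventually_psums_ge_ln_of_close_to_pi_a[OF a_pos V_meas V_law H1])
  then have U_good: "AE \<omega> in M. eventually (\<lambda>n. ln (real n) / (4 * a) \<le> psums (U \<omega>) n) sequentially"
    by (rule eventually_mono) (blast intro: abs_ge_self)
  have "AE \<omega> in M. \<exists>i0\<ge>2. \<forall>i\<ge>i0. psums (U \<omega>) i \<ge> ln (real i) / (4 * a)"
    using U_good
  proof eventually_elim
    case (elim \<omega>)
    then obtain N where "\<forall>i\<ge>N. ln (real i) / (4 * a) \<le> psums (U \<omega>) i"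
      by (auto simp: eventually_sequentially)
    then show ?case
      by (intro exI[of _ "max N 2"]) auto
  qed
  moreover have "AE \<omega> in M. gauss_summable (psums (U \<omega>))
      \<and> gauss_summable (psums (\<lambda>n. min (U \<omega> n) (V \<omega> n))) \<and> gauss_summable (psums (V \<omega>))"
    using good
    by (rule eventually_mono)
      (use a_pos gauss_summable_if_eventually_ln_le[of "4 * a"] in \<open>simp add: min_def abs_if\<close>)
  moreover have "AE v in \<mu>. eventually (\<lambda>n. ln (real n) / (4 * a) \<le> psums v n) sequentially"
    using U_good unfolding U_law[symmetric]
    by (simp add: AE_distr_iff[OF U_meas sets_eventually_ln_le_psums])
  then have "class_S \<mu>"
    using a_pos mu_prob mu_sets mu_nonneg by (intro class_S_if_AE_eventually_ln_le) auto
  ultimately show ?thesis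
    by blast
qed

end
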